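(* Let $k\geq 2$ be an integer. The generating function $\sum_{n\geq 0} h_{n,k}x^n$, where $h_{n,k}$ is the number of Hertzsprung words of length $n$ over $k$, equals \[\left(1-\frac{kx}{1+3x}-\frac{2x^{2}}{(1+3x)^{2}}\cdot\frac{U_{k}\!\left(-\frac{1+x}{2x}\right)-U_{k-1}\!\left(-\frac{1+x}{2x}\right)-1}{U_{k}\!\left(-\frac{1+x}{2x}\right)}\right)^{-1}.\]
   Context: For an integer $k\geq 2$, $[k]=\{1,\ldots,k\}$ and a word over $k$ of length $n$ is an element $w=w_1\cdots w_n\in[k]^n$ (including the empty word for $n=0$). $\mathrm{s}(w)$ is the number of indices $1\leq i\leq n-1$ with $|w_{i+1}-w_i|\leq 1$. A word $w$ is called Hertzsprung if $\mathrm{s}(w)=0$, i.e., any two consecutive letters differ by at least $2$. $U_n$ denotes the Chebyshev polynomial of the second kind: $U_0(x)=1$, $U_1(x)=2x$, $U_{n+1}(x)=2xU_n(x)-U_{n-1}(x)$. *)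

theory Defs
  imports "HOL-Analysis.Analysis"
begin

definition words :: "nat \<Rightarrow> nat \<Rightarrow> nat list set" where
  "words k n = {w. length w = n \<and> set w \<subseteq> {1..k}}"

text \<open>s(w): number of indices i (1 <= i <= n-1) with |w_(i+1) - w_i| <= 1 (0-based here).\<close>
definition s_stat :: "nat list \<Rightarrow> nat" where
  "s_stat w = card {i. i + 1 < length w \<and> \<bar>int (w ! (i+1)) - int (w ! i)\<bar> \<le> 1}"

definition hertzsprung :: "nat list \<Rightarrow> bool" where
  "hertzsprung w \<longleftrightarrow> s_stat w = 0"

definition h :: "nat \<Rightarrow> nat \<Rightarrow> nat" where
  "h n k = card {w \<in> words k n. hertzsprung w}"

fun chebyU :: "nat \<Rightarrow> real \<Rightarrow> real" where
  "chebyU 0 x = 1"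
| "chebyU (Suc 0) x = 2 * x"
| "chebyU (Suc (Suc n)) x = 2 * x * chebyU (Suc n) x - chebyU n x"

end

theory Submission
  imports Defs
begin

text \<open>Write \<open>g(n, j)\<close> (\<open>h_start n k j\<close>) for the number of Hertzsprung words of length
  \<open>n + 1\<close> with first letter \<open>j\<close>. Deleting the first letter gives
  \<open>g(n+1, j) = h(n+1) - g(n, j-1) - g(n, j) - g(n, j+1)\<close>, so the generating functions
  \<open>H = \<Sum> h(n) x^n\<close> (\<open>h_gf\<close>) and \<open>G_j = \<Sum> g(n, j) x^n\<close> (\<open>h_start_gf\<close>) satisfy
  \<open>H = 1 + x \<Sum>_j G_j\<close> together with the tridiagonal boundary value problem
  \<open>x G_(j-1) + (1 + x) G_j + x G_(j+1) = H\<close>, \<open>G_0 = G_(k+1) = 0\<close>.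
  For small \<open>x\<close> this system is diagonally dominant, so by the discrete maximum principle its
  solution is unique. It is \<open>H v_j\<close>, where \<open>v_j\<close> is built from the Chebyshev values
  \<open>U_(j-1)(y)\<close>, \<open>y = -(1+x)/(2x)\<close>, which solve the homogeneous recurrence.
  The sum of the \<open>v_j\<close> telescopes, and \<open>H = 1 / (1 - x \<Sum>_j v_j)\<close> is the claimed formula.\<close>

lemma hertzsprung_iff:
  "hertzsprung w \<longleftrightarrow> (\<forall>i. i + 1 < length w \<longrightarrow> 2 \<le> \<bar>int (w ! (i+1)) - int (w ! i)\<bar>)"
proof -
  have "finite {i. i + 1 < length w \<and> \<bar>int (w ! (i+1)) - int (w ! i)\<bar> \<le> 1}"
    by (rule finite_subset[of _ "{..<length w}"]) auto
  then show ?thesis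
    unfolding hertzsprung_def s_stat_def by (auto simp: card_eq_0_iff)
qed

lemma hertzsprung_Nil [simp]: "hertzsprung []"
  and hertzsprung_single [simp]: "hertzsprung [a]"
  by (simp_all add: hertzsprung_iff)

lemma hertzsprung_Cons_Cons [simp]:
  "hertzsprung (a # b # w) \<longleftrightarrow> 2 \<le> \<bar>int b - int a\<bar> \<and> hertzsprung (b # w)"
  unfolding hertzsprung_iff by (auto simp: All_less_Suc2 nth_Cons')

lemma Nil_in_words [simp]: "[] \<in> words k n \<longleftrightarrow> n = 0"
  and Cons_in_words [simp]: "a # w \<in> words k n \<longleftrightarrow> a \<in> {1..k} \<and> 0 < n \<and> w \<in> words k (n - 1)"
  by (auto simp: words_def)

lemma finite_words [simp]: "finite (words k n)"
  and card_words: "card (words k n) = k ^ n"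
proof -
  have "words k n = {w. set w \<subseteq> {1..k} \<and> length w = n}"
    by (auto simp: words_def)
  then show "finite (words k n)" "card (words k n) = k ^ n"
    by (simp_all add: finite_lists_length_eq card_lists_length_eq)
qed

lemma h_le_power: "h n k \<le> k ^ n"
  unfolding h_def by (metis (no_types, lifting) card_mono card_words finite_words mem_Collect_eq subsetI)

lemma h_0 [simp]: "h 0 k = 1"
proof -
  have "{w \<in> words k 0. hertzsprung w} = {[]}"
    by (auto simp: words_def)
  then show ?thesis
    by (simp add: h_def)
qed

definition h_start :: "nat \<Rightarrow> nat \<Rightarrow> nat \<Rightarrow> nat" where
  "h_start n k j = card {w \<in> words k (Suc n). hertzsprung w \<and> hd w = j}"

lemma h_start_le_power: "h_start n k j \<le> k ^ Suc n"
  unfolding h_start_def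
  by (metis (no_types, lifting) card_mono card_words finite_words mem_Collect_eq subsetI)

lemma hd_in_letters: "w \<in> words k (Suc n) \<Longrightarrow> hd w \<in> {1..k}"
  by (cases w) auto

lemma h_start_eq_0: "j \<notin> {1..k} \<Longrightarrow> h_start n k j = 0"
  unfolding h_start_def using hd_in_letters by force

lemma h_start_0: "j \<in> {1..k} \<Longrightarrow> h_start 0 k j = 1"
proof -
  assume "j \<in> {1..k}"
  then have "{w \<in> words k 1. hertzsprung w \<and> hd w = j} = {[j]}"
    by (auto simp: words_def length_Suc_conv)
  then show ?thesis
    by (simp add: h_start_def)
qed

lemma h_Suc_eq_sum_h_start: "h (Suc n) k = (\<Sum>j\<in>{1..k}. h_start n k j)"
proof -
  have "{w \<in> words k (Suc n). hertzsprung w}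
      = (\<Union>j\<in>{1..k}. {w \<in> words k (Suc n). hertzsprung w \<and> hd w = j})"
    using hd_in_letters by blast
  then show ?thesis
    unfolding h_def h_start_def by (simp only:) (rule card_UN_disjoint, auto)
qed

lemma h_start_Suc:
  assumes "j \<in> {1..k}"
  shows "h_start (Suc n) k j = (\<Sum>i\<in>{i\<in>{1..k}. 2 \<le> \<bar>int i - int j\<bar>}. h_start n k i)"
proof -
  let ?S = "\<lambda>i. {w \<in> words k (Suc n). hertzsprung w \<and> hd w = i}"
  have "{w \<in> words k (Suc (Suc n)). hertzsprung w \<and> hd w = j}
      = Cons j ` (\<Union>i\<in>{i\<in>{1..k}. 2 \<le> \<bar>int i - int j\<bar>}. ?S i)"
  proof (intro equalityI subsetI)
    fix w assume "w \<in> {w \<in> words k (Suc (Suc n)). hertzsprung w \<and> hd w = j}"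
    then obtain b v where "w = j # b # v" "b # v \<in> words k (Suc n)"
      "hertzsprung (b # v)" "2 \<le> \<bar>int b - int j\<bar>"
      by (auto simp: words_def length_Suc_conv)
    then show "w \<in> Cons j ` (\<Union>i\<in>{i\<in>{1..k}. 2 \<le> \<bar>int i - int j\<bar>}. ?S i)"
      using hd_in_letters by fastforce
  next
    fix w assume "w \<in> Cons j ` (\<Union>i\<in>{i\<in>{1..k}. 2 \<le> \<bar>int i - int j\<bar>}. ?S i)"
    then obtain b v where "w = j # b # v" "b # v \<in> words k (Suc n)"
      "hertzsprung (b # v)" "2 \<le> \<bar>int b - int j\<bar>"
      by (auto simp: words_def length_Suc_conv)
    then show "w \<in> {w \<in> words k (Suc (Suc n)). hertzsprung w \<and> hd w = j}"
      using assms by (auto simp: abs_minus_commute)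
  qed
  then show ?thesis
    unfolding h_start_def by (simp add: card_image) (rule card_UN_disjoint, auto)
qed

lemma h_start_recurrence:
  assumes j: "j \<in> {1..k}"
  shows "h_start (Suc n) k j + (h_start n k (j - 1) + h_start n k j + h_start n k (j + 1))
       = h (Suc n) k"
proof -
  have "(\<Sum>i\<in>{i\<in>{1..k}. \<not> 2 \<le> \<bar>int i - int j\<bar>}. h_start n k i)
      = (\<Sum>i\<in>{j - 1, j, j + 1}. h_start n k i)"
    by (rule sum.mono_neutral_left) (auto intro!: h_start_eq_0)
  also have "\<dots> = h_start n k (j - 1) + h_start n k j + h_start n k (j + 1)"
    using j by (cases j) auto
  finally show ?thesis
    using h_start_Suc[OF j, of n] h_Suc_eq_sum_h_start[of n k]
      sum.Int_Diff[of "{1..k}" "h_start n k" "{i. 2 \<le> \<bar>int i - int j\<bar>}"]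
    by (simp add: Int_def set_diff_eq conj_commute)
qed

lemma summable_power_series_bounded:
  fixes f :: "nat \<Rightarrow> nat"
  assumes "\<And>n. f n \<le> C * k ^ n" and "real k * \<bar>x\<bar> < 1"
  shows "summable (\<lambda>n. real (f n) * x ^ n)"
proof (rule summable_comparison_test')
  show "summable (\<lambda>n. real C * (real k * \<bar>x\<bar>) ^ n)"
    using assms(2) by (intro summable_mult summable_geometric) simp
  show "norm (real (f n) * x ^ n) \<le> real C * (real k * \<bar>x\<bar>) ^ n" for n
  proof -
    have "real (f n) \<le> real C * real k ^ n"
      using assms(1)[of n] by (metis of_nat_le_iff of_nat_mult of_nat_power)
    then have "real (f n) * \<bar>x\<bar> ^ n \<le> real C * real k ^ n * \<bar>x\<bar> ^ n"
      by (simp add: mult_right_mono)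
    then show ?thesis
      by (simp add: abs_mult power_abs power_mult_distrib mult.assoc)
  qed
qed

definition h_gf :: "nat \<Rightarrow> real \<Rightarrow> real" where
  "h_gf k x = (\<Sum>n. real (h n k) * x ^ n)"

definition h_start_gf :: "nat \<Rightarrow> nat \<Rightarrow> real \<Rightarrow> real" where
  "h_start_gf k j x = (\<Sum>n. real (h_start n k j) * x ^ n)"

lemma h_gf_sums: "real k * \<bar>x\<bar> < 1 \<Longrightarrow> (\<lambda>n. real (h n k) * x ^ n) sums h_gf k x"
  unfolding h_gf_def
  by (rule summable_sums, rule summable_power_series_bounded[where C = 1]) (simp_all add: h_le_power)

lemma h_start_gf_sums:
  "real k * \<bar>x\<bar> < 1 \<Longrightarrow> (\<lambda>n. real (h_start n k j) * x ^ n) sums h_start_gf k j x"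
  unfolding h_start_gf_def
  by (rule summable_sums, rule summable_power_series_bounded[where C = k])
     (use h_start_le_power in auto)

lemma h_start_gf_eq_0: "j \<notin> {1..k} \<Longrightarrow> h_start_gf k j x = 0"
  by (simp add: h_start_gf_def h_start_eq_0)

lemma h_gf_eq:
  assumes "real k * \<bar>x\<bar> < 1"
  shows "h_gf k x = 1 + x * (\<Sum>j\<in>{1..k}. h_start_gf k j x)"
proof -
  have "(\<lambda>n. real (h (Suc n) k) * x ^ Suc n) sums (h_gf k x - 1)"
    using h_gf_sums[OF assms] sums_Suc_iff[of "\<lambda>n. real (h n k) * x ^ n"] by simp
  moreover have "(\<lambda>n. real (h (Suc n) k) * x ^ Suc n)
               = (\<lambda>n. x * (\<Sum>j\<in>{1..k}. real (h_start n k j) * x ^ n))"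
    by (simp add: h_Suc_eq_sum_h_start sum_distrib_left sum_distrib_right mult_ac)
  moreover have "\<dots> sums (x * (\<Sum>j\<in>{1..k}. h_start_gf k j x))"
    by (intro sums_mult sums_sum h_start_gf_sums assms)
  ultimately show ?thesis
    using sums_unique2 by fastforce
qed

lemma h_start_gf_recurrence:
  assumes "real k * \<bar>x\<bar> < 1" and j: "j \<in> {1..k}"
  shows "x * h_start_gf k (j - 1) x + (1 + x) * h_start_gf k j x + x * h_start_gf k (j + 1) x
       = h_gf k x"
proof -
  let ?G = "\<lambda>i. h_start_gf k i x"
  have "(\<lambda>n. real (h_start (Suc n) k j) * x ^ Suc n) sums (?G j - 1)"
    using h_start_gf_sums[OF assms(1)] sums_Suc_iff[of "\<lambda>n. real (h_start n k j) * x ^ n"]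
    by (simp add: h_start_0[OF j])
  moreover have "(\<lambda>n. x * (real (h_start n k (j - 1)) * x ^ n + real (h_start n k j) * x ^ n
                          + real (h_start n k (j + 1)) * x ^ n))
               sums (x * (?G (j - 1) + ?G j + ?G (j + 1)))"
    by (intro sums_mult sums_add h_start_gf_sums assms(1))
  ultimately have "(\<lambda>n. real (h_start (Suc n) k j) * x ^ Suc n
      + x * (real (h_start n k (j - 1)) * x ^ n + real (h_start n k j) * x ^ n
             + real (h_start n k (j + 1)) * x ^ n))
    sums (?G j - 1 + x * (?G (j - 1) + ?G j + ?G (j + 1)))"
    by (rule sums_add)
  also have "(\<lambda>n. real (h_start (Suc n) k j) * x ^ Suc n
      + x * (real (h_start n k (j - 1)) * x ^ n + real (h_start n k j) * x ^ n
             + real (h_start n k (j + 1)) * x ^ n))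
    = (\<lambda>n. real (h (Suc n) k) * x ^ Suc n)"
    unfolding h_start_recurrence[OF j, symmetric] of_nat_add by (simp add: algebra_simps)
  finally have "(\<lambda>n. real (h (Suc n) k) * x ^ Suc n)
    sums (?G j - 1 + x * (?G (j - 1) + ?G j + ?G (j + 1)))" .
  moreover have "(\<lambda>n. real (h (Suc n) k) * x ^ Suc n) sums (h_gf k x - 1)"
    using h_gf_sums[OF assms(1)] sums_Suc_iff[of "\<lambda>n. real (h n k) * x ^ n"] by simp
  ultimately show ?thesis
    using sums_unique2 by (fastforce simp: algebra_simps)
qed

text \<open>\<open>U_(n-1)(y)\<close> with \<open>U_(-1) = 0\<close>, so that the Chebyshev recurrence holds from \<open>n = 0\<close> on.\<close>

definition chebyU_shifted :: "nat \<Rightarrow> real \<Rightarrow> real" where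
  "chebyU_shifted n y = (if n = 0 then 0 else chebyU (n - 1) y)"

lemma chebyU_shifted_0 [simp]: "chebyU_shifted 0 y = 0"
  and chebyU_shifted_Suc [simp]: "chebyU_shifted (Suc n) y = chebyU n y"
  by (simp_all add: chebyU_shifted_def)

lemma chebyU_shifted_Suc_Suc:
  "chebyU_shifted (Suc (Suc n)) y = 2 * y * chebyU_shifted (Suc n) y - chebyU_shifted n y"
  by (cases n) simp_all

lemma chebyU_shifted_abs_ge:
  assumes "1 \<le> \<bar>y\<bar>"
  shows "real n \<le> \<bar>chebyU_shifted n y\<bar>"
proof -
  have "real n \<le> \<bar>chebyU_shifted n y\<bar> \<and> \<bar>chebyU_shifted n y\<bar> + 1 \<le> \<bar>chebyU_shifted (Suc n) y\<bar>"
  proof (induction n)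
    case (Suc n)
    have "2 * \<bar>chebyU_shifted (Suc n) y\<bar> \<le> \<bar>2 * y * chebyU_shifted (Suc n) y\<bar>"
      using assms by (simp add: abs_mult mult_right_mono)
    then show ?case
      using Suc.IH by (simp only: chebyU_shifted_Suc_Suc) linarith
  qed simp
  then show ?thesis ..
qed

lemma chebyU_nonzero: "1 \<le> \<bar>y\<bar> \<Longrightarrow> chebyU n y \<noteq> 0"
  using chebyU_shifted_abs_ge[of y "Suc n"] by auto

lemma sum_chebyU_shifted:
  "(\<Sum>j=1..n. chebyU_shifted j y) * (2 * y - 2)
     = chebyU_shifted (Suc n) y - chebyU_shifted n y - 1"
proof (induction n)
  case (Suc n)
  then show ?case
    using chebyU_shifted_Suc_Suc[of n y] by (simp add: algebra_simps)
qed simp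

lemma chebyU_shifted_three_term:
  assumes "b + 2 * a * y = 0" and "0 < j"
  shows "a * chebyU_shifted (j - 1) y + b * chebyU_shifted j y + a * chebyU_shifted (j + 1) y = 0"
proof -
  obtain i where "j = Suc i"
    using assms(2) gr0_implies_Suc by blast
  then have "a * chebyU_shifted (j - 1) y + b * chebyU_shifted j y + a * chebyU_shifted (j + 1) y
      = (b + 2 * a * y) * chebyU_shifted j y"
    by (simp add: chebyU_shifted_Suc_Suc algebra_simps flip: chebyU_shifted_Suc)
  then show ?thesis
    using assms(1) by simp
qed

text \<open>Discrete maximum principle: at an interior point where \<open>\<bar>u\<bar>\<close> is maximal, diagonal
  dominance forces the maximum to be \<open>0\<close>.\<close>

lemma tridiagonal_eq_0:
  fixes u :: "nat \<Rightarrow> real"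
  assumes dominant: "\<bar>a\<bar> + \<bar>c\<bar> < \<bar>b\<bar>" and "u 0 = 0" and "u (Suc k) = 0"
    and eq: "\<And>j. j \<in> {1..k} \<Longrightarrow> a * u (j - 1) + b * u j + c * u (j + 1) = 0"
    and "j \<le> Suc k"
  shows "u j = 0"
proof -
  define M where "M = Max ((\<lambda>i. \<bar>u i\<bar>) ` {..Suc k})"
  have le_M: "\<bar>u i\<bar> \<le> M" if "i \<le> Suc k" for i
    unfolding M_def using that by (intro Max_ge) auto
  obtain i where i: "i \<le> Suc k" "\<bar>u i\<bar> = M"
    using Max_in[of "(\<lambda>i. \<bar>u i\<bar>) ` {..Suc k}"] unfolding M_def by fastforce
  have "M \<le> 0"
  proof (cases "i \<in> {1..k}")
    case False
    then have "i = 0 \<or> i = Suc k"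
      using i(1) by auto
    then show ?thesis
      using i(2) assms(2,3) by auto
  next
    case True
    have "\<bar>b\<bar> * M = \<bar>a * u (i - 1) + c * u (i + 1)\<bar>"
      using eq[OF True] i(2) by (metis abs_minus_cancel abs_mult add.commute add_eq_0_iff2 add.assoc)
    also have "\<dots> \<le> \<bar>a\<bar> * M + \<bar>c\<bar> * M"
      using True le_M[of "i - 1"] le_M[of "i + 1"]
      by (auto simp: abs_mult intro!: abs_triangle_ineq[THEN order_trans] add_mono mult_left_mono)
    finally have "(\<bar>b\<bar> - (\<bar>a\<bar> + \<bar>c\<bar>)) * M \<le> 0"
      by (simp add: algebra_simps)
    then show ?thesis
      using dominant by (simp add: mult_le_0_iff)
  qed
  then show ?thesis
    using le_M[OF assms(5)] by simp
qed

lemma tridiagonal_unique: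
  fixes u w :: "nat \<Rightarrow> real"
  assumes "\<bar>a\<bar> + \<bar>c\<bar> < \<bar>b\<bar>" and "u 0 = w 0" and "u (Suc k) = w (Suc k)"
    and "\<And>j. j \<in> {1..k} \<Longrightarrow> a * u (j - 1) + b * u j + c * u (j + 1)
                              = a * w (j - 1) + b * w j + c * w (j + 1)"
    and "j \<le> Suc k"
  shows "u j = w j"
  using tridiagonal_eq_0[of a c b "\<lambda>i. u i - w i" k j] assms by (simp add: algebra_simps)

text \<open>For \<open>b + 2 a y = 0\<close> this solves \<open>a v_(j-1) + b v_j + a v_(j+1) = 1\<close>, \<open>v_0 = v_(k+1) = 0\<close>:
  the constant \<open>1 / (b + 2a)\<close> is a particular solution, and \<open>j \<mapsto> U_(j-1)(y)\<close> and its reflection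
  \<open>j \<mapsto> U_(k-j)(y)\<close> solve the homogeneous equation.\<close>

definition tridiagonal_solution :: "nat \<Rightarrow> real \<Rightarrow> real \<Rightarrow> real \<Rightarrow> nat \<Rightarrow> real" where
  "tridiagonal_solution k a b y j =
     (1 - (chebyU_shifted j y + chebyU_shifted (Suc k - j) y) / chebyU k y) / (b + 2 * a)"

lemma tridiagonal_solution_boundary:
  assumes "chebyU k y \<noteq> 0"
  shows "tridiagonal_solution k a b y 0 = 0" and "tridiagonal_solution k a b y (Suc k) = 0"
  using assms by (simp_all add: tridiagonal_solution_def)

lemma tridiagonal_solution_eq:
  assumes y: "b + 2 * a * y = 0" and "b + 2 * a \<noteq> 0" and j: "j \<in> {1..k}"
  shows "a * tridiagonal_solution k a b y (j - 1) + b * tridiagonal_solution k a b y j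
       + a * tridiagonal_solution k a b y (j + 1) = 1"
proof -
  let ?W = "\<lambda>i. chebyU_shifted i y"
  define c where "c = 1 / (b + 2 * a)"
  obtain i where i: "Suc k - j = i" "Suc k - (j - 1) = i + 1" "Suc k - (j + 1) = i - 1" "0 < i"
    using j by auto
  have v: "tridiagonal_solution k a b y l = c - c / chebyU k y * (?W l + ?W (Suc k - l))" for l
    unfolding tridiagonal_solution_def c_def divide_inverse by algebra
  have "a * tridiagonal_solution k a b y (j - 1) + b * tridiagonal_solution k a b y j
       + a * tridiagonal_solution k a b y (j + 1)
     = c * (b + 2 * a) - c / chebyU k y * ((a * ?W (j - 1) + b * ?W j + a * ?W (j + 1))
                                       + (a * ?W (i - 1) + b * ?W i + a * ?W (i + 1)))"
    unfolding v i(1-3) by (simp add: algebra_simps)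
  also have "\<dots> = 1"
    using chebyU_shifted_three_term[OF y] j i(4) assms(2) by (simp add: c_def)
  finally show ?thesis .
qed

lemma sum_tridiagonal_solution:
  assumes "y \<noteq> 1"
  shows "(\<Sum>j=1..k. tridiagonal_solution k a b y j)
       = (real k - 2 * (chebyU k y - chebyU_shifted k y - 1) / ((2 * y - 2) * chebyU k y))
         / (b + 2 * a)"
proof -
  let ?W = "\<lambda>i. chebyU_shifted i y"
  have "(\<Sum>j=1..k. ?W (Suc k - j)) = (\<Sum>j=1..k. ?W j)"
    using sum.atLeastAtMost_rev[of "\<lambda>j. ?W (Suc k - j)" 1 k] by simp
  moreover have "(\<Sum>j=1..k. ?W j) = (chebyU k y - ?W k - 1) / (2 * y - 2)"
    using sum_chebyU_shifted[where n = k] assms by (simp add: field_simps)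
  ultimately show ?thesis
    unfolding tridiagonal_solution_def
    by (simp add: sum_divide_distrib[symmetric] sum_subtractf sum.distrib add_divide_distrib[symmetric]
        sum_divide_distrib)
qed

lemma h_gf_fixpoint:
  fixes x :: real
  defines "y \<equiv> - (1 + x) / (2 * x)"
  assumes "x \<noteq> 0" and "3 * \<bar>x\<bar> < 1" and conv: "real k * \<bar>x\<bar> < 1"
  shows "h_gf k x = 1 + h_gf k x * (x * (\<Sum>j=1..k. tridiagonal_solution k x (1 + x) y j))"
proof -
  let ?H = "h_gf k x" and ?G = "\<lambda>j. h_start_gf k j x"
  let ?v = "tridiagonal_solution k x (1 + x) y"
  have dominant: "\<bar>x\<bar> + \<bar>x\<bar> < \<bar>1 + x\<bar>" and "1 + x + 2 * x \<noteq> 0"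
    using assms(3) by linarith+
  have y: "1 + x + 2 * x * y = 0"
    using assms(2) by (simp add: y_def)
  have "2 * \<bar>x\<bar> * 1 < 2 * \<bar>x\<bar> * \<bar>y\<bar>"
    using arg_cong[OF y[unfolded add_eq_0_iff], of abs] dominant by (simp add: abs_mult)
  then have "1 \<le> \<bar>y\<bar>"
    using mult_less_cancel_left_pos[of "2 * \<bar>x\<bar>" 1 "\<bar>y\<bar>"] assms(2) by simp
  then have U: "chebyU k y \<noteq> 0"
    by (rule chebyU_nonzero)
  have G: "?G j = ?H * ?v j" if "j \<le> Suc k" for j
  proof (rule tridiagonal_unique[OF dominant _ _ _ that])
    show "?G 0 = ?H * ?v 0" "?G (Suc k) = ?H * ?v (Suc k)"
      by (simp_all add: h_start_gf_eq_0 tridiagonal_solution_boundary[OF U])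
    fix j assume j: "j \<in> {1..k}"
    have "x * (?H * ?v (j - 1)) + (1 + x) * (?H * ?v j) + x * (?H * ?v (j + 1))
        = ?H * (x * ?v (j - 1) + (1 + x) * ?v j + x * ?v (j + 1))"
      by (simp add: algebra_simps)
    also have "\<dots> = ?H"
      using tridiagonal_solution_eq[OF y \<open>1 + x + 2 * x \<noteq> 0\<close> j] by simp
    finally show "x * ?G (j - 1) + (1 + x) * ?G j + x * ?G (j + 1)
        = x * (?H * ?v (j - 1)) + (1 + x) * (?H * ?v j) + x * (?H * ?v (j + 1))"
      using h_start_gf_recurrence[OF conv j] by simp
  qed
  have "?H = 1 + x * (\<Sum>j=1..k. ?G j)"
    by (rule h_gf_eq[OF conv])
  also have "\<dots> = 1 + x * (\<Sum>j=1..k. ?H * ?v j)"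
    using G by simp
  finally show ?thesis
    by (simp add: sum_distrib_left mult_ac)
qed

lemma x_sum_tridiagonal_solution:
  fixes x :: real
  defines "y \<equiv> - (1 + x) / (2 * x)"
  assumes "1 \<le> k" and "x \<noteq> 0" and "1 + 3 * x \<noteq> 0"
  shows "x * (\<Sum>j=1..k. tridiagonal_solution k x (1 + x) y j)
       = real k * x / (1 + 3 * x) + 2 * x^2 / (1 + 3 * x)^2 *
           ((chebyU k y - chebyU (k - 1) y - 1) / chebyU k y)"
proof -
  define N where "N = chebyU k y - chebyU (k - 1) y - 1"
  have "y \<noteq> 1"
    using assms(3,4) by (auto simp: y_def field_simps)
  have x_div: "x / (2 * y - 2) = - (x ^ 2) / (1 + 3 * x)"
    using assms(3,4) by (simp add: y_def field_simps power2_eq_square)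
  have shifted_k: "chebyU_shifted k y = chebyU (k - 1) y"
    using assms(2) by (cases k) auto
  have "x * (\<Sum>j=1..k. tridiagonal_solution k x (1 + x) y j)
      = real k * x / (1 + 3 * x) - 2 * (x / (2 * y - 2)) * (N / chebyU k y) / (1 + 3 * x)"
    unfolding sum_tridiagonal_solution[OF \<open>y \<noteq> 1\<close>] shifted_k N_def[symmetric]
      divide_inverse inverse_mult_distrib
    by (simp add: algebra_simps)
  also have "\<dots> = real k * x / (1 + 3 * x) + 2 * x^2 / (1 + 3 * x)^2 * (N / chebyU k y)"
    unfolding x_div unfolding power2_eq_square divide_inverse inverse_mult_distrib
    by (simp add: algebra_simps)
  finally show ?thesis
    unfolding N_def .
qed

lemma h_gf_closed_form:
  fixes x :: real
  defines "y \<equiv> - (1 + x) / (2 * x)"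
  assumes "1 \<le> k" and "x \<noteq> 0" and "3 * \<bar>x\<bar> < 1" and "real k * \<bar>x\<bar> < 1"
  shows "h_gf k x = 1 / (1 - real k * x / (1 + 3 * x) - 2 * x^2 / (1 + 3 * x)^2 *
                         ((chebyU k y - chebyU (k - 1) y - 1) / chebyU k y))"
proof -
  have "1 + 3 * x \<noteq> 0"
    using assms(4) by linarith
  then have "h_gf k x * (1 - (real k * x / (1 + 3 * x) + 2 * x^2 / (1 + 3 * x)^2 *
                         ((chebyU k y - chebyU (k - 1) y - 1) / chebyU k y))) = 1"
    using h_gf_fixpoint[OF assms(3-5)]
    unfolding x_sum_tridiagonal_solution[OF assms(2,3) \<open>1 + 3 * x \<noteq> 0\<close>] y_def
    by (simp only: right_diff_distrib mult_1_right)
  then show ?thesis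
    unfolding diff_diff_eq by (metis mult_zero_right nonzero_eq_divide_eq zero_neq_one)
qed

theorem mainTheorem3:
  fixes k :: nat
  assumes "k \<ge> 2"
  shows "\<forall>\<^sub>F x in at (0::real).
     (\<lambda>n. real (h n k) * x ^ n) sums
       (1 / (1 - real k * x / (1 + 3 * x)
             - 2 * x^2 / (1 + 3 * x)^2 *
               ((chebyU k (- (1 + x) / (2 * x)) - chebyU (k - 1) (- (1 + x) / (2 * x)) - 1)
                / chebyU k (- (1 + x) / (2 * x)))))"
proof -
  have "\<forall>\<^sub>F x in at (0::real). x \<noteq> 0 \<and> (real k + 3) * \<bar>x\<bar> < 1"
    unfolding eventually_at by (rule exI[of _ "1 / (real k + 3)"]) (auto simp: field_simps)
  then show ?thesis
  proof eventually_elim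
    case (elim x)
    have "real k * \<bar>x\<bar> + 3 * \<bar>x\<bar> < 1" and "0 \<le> real k * \<bar>x\<bar>" and "0 \<le> \<bar>x\<bar>"
      using elim by (simp_all add: distrib_right)
    then have conv: "real k * \<bar>x\<bar> < 1" and "3 * \<bar>x\<bar> < 1"
      by linarith+
    then show ?case
      using h_gf_sums[OF conv] h_gf_closed_form[of k x] assms elim by simp
  qed
qed

end
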